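(* Let $\Theta$ and $\mathcal{Z}$ be measurable spaces, let $S$ be a random element of $\mathcal{Z}$, and let $\Delta:\Theta\times\mathcal{Z}\to\mathbb{R}$ and $V:\Theta\times\mathcal{Z}\to[0,\infty)$ be measurable maps such that, writing $\Delta_\vartheta=\Delta(\vartheta,S)$, $V_\vartheta=V(\vartheta,S)$, the pair $(\Delta_\vartheta,\sqrt{V_\vartheta})$ is a canonical pair for every fixed $\vartheta\in\Theta$. Let $\hat p$ be a probability kernel from $\mathcal{Z}$ to $\Theta$, $p^0$ a probability measure on $\Theta$, and $\theta$ a random element of $\Theta$ whose conditional distribution given $S$ is $\hat p_S$; assume $\int|\Delta(\vartheta,S)|\,\hat p_S(d\vartheta)<\infty$ a.s. Then: (i) for every $y>0$, \[ \mathbb{E}\left[\frac{y}{\sqrt{y^2+\mathbb{E}[V_\theta\mid S]}}\exp\left(\frac{\mathbb{E}[\Delta_\theta\mid S]^2}{2(y^2+\mathbb{E}[V_\theta\mid S])}-\mathrm{KL}(\hat p_S\,\|\,p^0)\right)\right]\le 1; \] (ii) if moreover $0<\mathbb{E}[V_\theta]<\infty$, then for every $x\ge0$, \[ \mathbb{E}\left[\exp\left(x\sqrt{\left(\frac{\mathbb{E}[\Delta_\theta\mid S]^2}{\mathbb{E}[V_\theta]+\mathbb{E}[V_\theta\mid S]}-2\,\mathrm{KL}(\hat p_S\,\|\,p^0)\right)_+}\right)\right]\le 2e^{x^2}. \]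
   Context: A pair $(A,B)$ of real random variables is a canonical pair if $B\ge0$ and $\sup_{\lambda\in\mathbb{R}}\mathbb{E}[\exp(\lambda A-\lambda^2B^2/2)]\le1$. A probability kernel $\hat p$ from $\mathcal{Z}$ to $\Theta$ assigns to each $z$ a probability measure $\hat p_z$ on $\Theta$, measurably in $z$. Notation: $\mathbb{E}[\Delta_\theta\mid S]=\int\Delta(\vartheta,S)\,\hat p_S(d\vartheta)$, $\mathbb{E}[V_\theta\mid S]=\int V(\vartheta,S)\,\hat p_S(d\vartheta)$, $\mathbb{E}[V_\theta]=\mathbb{E}[\mathbb{E}[V_\theta\mid S]]$. $\mathrm{KL}(p\,\|\,q)=\int\ln\frac{dp}{dq}\,dp$ if $p\ll q$ and $+\infty$ otherwise, with conventions $e^{-\infty}=0$ and $(-\infty)_+=0$. $(s)_+=\max\{0,s\}$. *)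

theory Defs
  imports "HOL-Probability.Probability"
begin

text \<open>The integral of ln(dp/dq) w.r.t. p is split into
  its positive and negative parts (the negative part is always finite for
  probability measures).\<close>
definition KL :: "'a measure \<Rightarrow> 'a measure \<Rightarrow> ereal" where
  "KL p q = (if absolutely_continuous q p then
      enn2ereal (\<integral>\<^sup>+ x. ennreal (ln (enn2real (RN_deriv q p x))) \<partial>p)
      - enn2ereal (\<integral>\<^sup>+ x. ennreal (- ln (enn2real (RN_deriv q p x))) \<partial>p)
    else \<infinity>)"

definition eexp :: "ereal \<Rightarrow> ennreal" where
  "eexp x = (case x of ereal r \<Rightarrow> ennreal (exp r) | PInfty \<Rightarrow> \<infinity> | MInfty \<Rightarrow> 0)"

end

theory Submission
  imports Defs
begin

text \<open>For fixed \<open>\<lambda>\<close>, averaging the canonical-pair inequality over \<open>\<vartheta> \<sim> p\<^sup>0\<close> and changing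
  measure from \<open>p\<^sup>0\<close> to \<open>p\<^sub>S\<close> (Donsker--Varadhan) bounds
  \<open>exp (\<lambda> E[\<Delta>\<^sub>\<theta>|S] - \<lambda>\<^sup>2 E[V\<^sub>\<theta>|S] / 2 - KL(p\<^sub>S \<parallel> p\<^sup>0))\<close> by a nonnegative variable of mean at
  most 1. Integrating \<open>\<lambda>\<close> against the normal density of mean 0 and variance \<open>1/y\<^sup>2\<close> turns the
  left-hand side into the integrand of (i), a Gaussian integral, while Tonelli keeps the mean
  bound. For (ii) take \<open>y\<^sup>2 = E[V\<^sub>\<theta>]\<close>: two elementary inequalities bound the integrand of (ii)
  by \<open>exp (x\<^sup>2) / 2\<close> times \<open>2 + (integrand of (i)) + E[V\<^sub>\<theta>|S] / (2 E[V\<^sub>\<theta>])\<close>, whose mean is at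
  most \<open>7/2\<close>.\<close>

lemma mult_neg_ln_le_one:
  fixes r :: real
  assumes "0 < r"
  shows "r * - ln r \<le> 1"
proof -
  have "- ln r \<le> 1 / r - 1"
    using ln_le_minus_one[of "1 / r"] assms by (simp add: ln_div)
  hence "r * - ln r \<le> r * (1 / r - 1)"
    using assms by (intro mult_left_mono) auto
  also have "\<dots> \<le> 1"
    using assms by (simp add: field_simps)
  finally show ?thesis .
qed

lemma ennreal_mult_neg_ln_le_one: "F * ennreal (- ln (enn2real F)) \<le> 1"
proof (cases F rule: ennreal_cases)
  case (real r)
  show ?thesis
  proof (cases "0 < r \<and> ln r \<le> 0")
    case True
    hence "F * ennreal (- ln (enn2real F)) = ennreal (r * - ln r)"
      using real by (simp add: ennreal_mult[symmetric])
    also have "\<dots> \<le> 1"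
      using mult_neg_ln_le_one[of r] True by (simp add: ennreal_le_1)
    finally show ?thesis .
  next
    case False
    thus ?thesis using real by (auto simp: ennreal_neg)
  qed
qed simp

lemma nn_integral_neg_ln_RN_deriv_le_one:
  assumes "prob_space q" "sets p = sets q" "absolutely_continuous q p"
  shows "(\<integral>\<^sup>+ x. ennreal (- ln (enn2real (RN_deriv q p x))) \<partial>p) \<le> 1"
proof -
  interpret q: prob_space q by fact
  have "(\<integral>\<^sup>+ x. ennreal (- ln (enn2real (RN_deriv q p x))) \<partial>p)
      = (\<integral>\<^sup>+ x. RN_deriv q p x * ennreal (- ln (enn2real (RN_deriv q p x))) \<partial>q)"
    using assms(2,3) by (intro q.RN_deriv_nn_integral) auto
  also have "\<dots> \<le> (\<integral>\<^sup>+ x. 1 \<partial>q)"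
    by (intro nn_integral_mono ennreal_mult_neg_ln_le_one)
  finally show ?thesis
    by (simp add: q.emeasure_space_1)
qed

lemma enn2ereal_minus_enn2ereal:
  "a \<noteq> \<infinity> \<Longrightarrow> b \<noteq> \<infinity> \<Longrightarrow> enn2ereal a - enn2ereal b = ereal (enn2real a - enn2real b)"
  by (cases a; cases b) (auto simp: enn2ereal_ennreal)

text \<open>The negative part of the log-density is integrable (\<open>r * - ln r \<le> 1\<close>), so a finite KL
  divergence is a Lebesgue integral.\<close>
lemma KL_finite:
  assumes q: "prob_space q" and sets: "sets p = sets q" and fin: "KL p q \<noteq> \<infinity>"
  shows KL_finite_absolutely_continuous: "absolutely_continuous q p"
    and KL_finite_integrable: "integrable p (\<lambda>x. ln (enn2real (RN_deriv q p x)))"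
    and KL_finite_eq: "KL p q = ereal (\<integral>x. ln (enn2real (RN_deriv q p x)) \<partial>p)"
proof -
  show ac: "absolutely_continuous q p"
    using fin by (auto simp: KL_def split: if_splits)
  let ?L = "\<lambda>x. ln (enn2real (RN_deriv q p x))"
  have "(\<integral>\<^sup>+ x. ennreal (- ?L x) \<partial>p) \<le> 1"
    by (rule nn_integral_neg_ln_RN_deriv_le_one[OF q sets ac])
  hence neg: "(\<integral>\<^sup>+ x. ennreal (- ?L x) \<partial>p) \<noteq> \<infinity>"
    by (auto simp: top_unique)
  hence pos: "(\<integral>\<^sup>+ x. ennreal (?L x) \<partial>p) \<noteq> \<infinity>"
    using fin ac by (auto simp: KL_def)
  show int: "integrable p ?L"
    using neg pos sets by (simp add: real_integrable_def)
  show "KL p q = ereal (\<integral>x. ?L x \<partial>p)"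
    using ac neg pos
    by (simp add: KL_def real_lebesgue_integral_def[OF int] enn2ereal_minus_enn2ereal)
qed

lemma ennreal_integral_le_nn_integral:
  fixes f :: "'a \<Rightarrow> real"
  assumes "integrable M f"
  shows "ennreal (\<integral>x. f x \<partial>M) \<le> (\<integral>\<^sup>+ x. ennreal (f x) \<partial>M)"
proof -
  have "ennreal (\<integral>x. f x \<partial>M) \<le> ennreal (\<integral>x. max 0 (f x) \<partial>M)"
    using assms by (intro ennreal_leI integral_mono) auto
  also have "ennreal (\<integral>x. max 0 (f x) \<partial>M) = (\<integral>\<^sup>+ x. ennreal (f x) \<partial>M)"
    using assms by (subst nn_integral_eq_integral[symmetric]) (auto simp: ennreal_max_0)
  finally show ?thesis .
qed

text \<open>Jensen's inequality for the exponential, without integrability of \<open>exp \<circ> u\<close>: integrate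
  the tangent line \<open>exp c * (1 + t - c) \<le> exp t\<close> at the mean \<open>c\<close>.\<close>
lemma (in prob_space) exp_integral_le_nn_integral_exp:
  assumes "integrable M u"
  shows "ennreal (exp (\<integral>x. u x \<partial>M)) \<le> (\<integral>\<^sup>+ x. ennreal (exp (u x)) \<partial>M)"
proof -
  define c where "c = (\<integral>x. u x \<partial>M)"
  have "integrable M (\<lambda>x. exp c * (1 + u x - c))"
    using assms by auto
  moreover have "(\<integral>x. exp c * (1 + u x - c) \<partial>M) = exp c"
    using assms by (simp add: c_def prob_space)
  ultimately have "ennreal (exp c) \<le> (\<integral>\<^sup>+ x. ennreal (exp c * (1 + u x - c)) \<partial>M)"
    by (metis ennreal_integral_le_nn_integral)
  also have "\<dots> \<le> (\<integral>\<^sup>+ x. ennreal (exp (u x)) \<partial>M)"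
  proof (intro nn_integral_mono ennreal_leI)
    fix x
    have "exp c * (1 + (u x - c)) \<le> exp c * exp (u x - c)"
      by (intro mult_left_mono exp_ge_add_one_self) auto
    thus "exp c * (1 + u x - c) \<le> exp (u x)"
      by (simp add: exp_diff add_diff_eq)
  qed
  finally show ?thesis
    unfolding c_def .
qed

lemma donsker_varadhan:
  assumes p: "prob_space p" and q: "prob_space q" and sets: "sets p = sets q"
    and KL: "KL p q = ereal k"
    and g: "integrable p g" "g \<in> borel_measurable q"
  shows "ennreal (exp ((\<integral>x. g x \<partial>p) - k)) \<le> (\<integral>\<^sup>+ x. ennreal (exp (g x)) \<partial>q)"
proof -
  interpret q: prob_space q by fact
  interpret p: prob_space p by fact
  have fin: "KL p q \<noteq> \<infinity>"
    using KL by simp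
  note ac = KL_finite_absolutely_continuous[OF q sets fin]
  define F where "F = RN_deriv q p"
  define L where "L = (\<lambda>x. ln (enn2real (F x)))"
  have L_int: "integrable p L" and k: "k = (\<integral>x. L x \<partial>p)"
    using KL_finite_integrable[OF q sets fin] KL_finite_eq[OF q sets fin] KL
    by (simp_all add: L_def F_def)
  have "ennreal (exp ((\<integral>x. g x \<partial>p) - k)) = ennreal (exp (\<integral>x. g x - L x \<partial>p))"
    using g L_int k by simp
  also have "\<dots> \<le> (\<integral>\<^sup>+ x. ennreal (exp (g x - L x)) \<partial>p)"
    using g L_int by (intro p.exp_integral_le_nn_integral_exp) auto
  also have "\<dots> = (\<integral>\<^sup>+ x. F x * ennreal (exp (g x - L x)) \<partial>q)"
    unfolding F_def L_def using ac sets g by (intro q.RN_deriv_nn_integral) auto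
  also have "\<dots> \<le> (\<integral>\<^sup>+ x. ennreal (exp (g x)) \<partial>q)"
  proof (rule nn_integral_mono_AE)
    have "AE x in q. F x \<noteq> \<infinity>"
      unfolding F_def using q.RN_deriv_finite[OF _ ac sets] p.sigma_finite_measure by simp
    thus "AE x in q. F x * ennreal (exp (g x - L x)) \<le> ennreal (exp (g x))"
    proof eventually_elim
      case (elim x)
      then obtain r where r: "F x = ennreal r" "0 \<le> r"
        by (cases "F x" rule: ennreal_cases) auto
      show ?case
      proof (cases "r = 0")
        case False
        hence "r * exp (g x - L x) = exp (g x)"
          using r by (simp add: L_def exp_diff)
        thus ?thesis
          using r by (simp add: ennreal_mult[symmetric])
      qed (use r in simp)
    qed
  qed
  finally show ?thesis .
qed

lemma nn_integral_normal_density: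
  "0 < \<sigma> \<Longrightarrow> (\<integral>\<^sup>+ x. ennreal (normal_density \<mu> \<sigma> x) \<partial>lborel) = 1"
  by (subst nn_integral_eq_integral) (auto intro: integrable_normal_density simp: integral_normal_density)

text \<open>Completing the square: tilting the centred normal density of variance \<open>1/y\<^sup>2\<close> by
  \<open>exp (l * d - l\<^sup>2 * v / 2)\<close>, with \<open>s\<^sup>2 = y\<^sup>2 + v\<close>, gives the normal density of mean \<open>d/s\<^sup>2\<close>
  and variance \<open>1/s\<^sup>2\<close>.\<close>
lemma normal_density_mult_exp:
  fixes y s d l :: real
  assumes y: "0 < y" and s: "0 < s"
  shows "normal_density 0 (1/y) l * exp (l * d - l\<^sup>2 * (s\<^sup>2 - y\<^sup>2) / 2)
       = y / s * exp (d\<^sup>2 / (2 * s\<^sup>2)) * normal_density (d / s\<^sup>2) (1/s) l"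
proof -
  have n_y: "normal_density 0 (1/y) l = y / sqrt (2*pi) * exp (- l\<^sup>2 * y\<^sup>2 / 2)"
    using y by (simp add: normal_density_def real_sqrt_mult real_sqrt_divide power_divide field_simps)
  have n_s: "normal_density (d / s\<^sup>2) (1/s) l = s / sqrt (2*pi) * exp (- (l - d / s\<^sup>2)\<^sup>2 * s\<^sup>2 / 2)"
    using s by (simp add: normal_density_def real_sqrt_mult real_sqrt_divide power_divide field_simps)
  have square: "- l\<^sup>2 * y\<^sup>2 / 2 + (l * d - l\<^sup>2 * (s\<^sup>2 - y\<^sup>2) / 2)
      = d\<^sup>2 / (2 * s\<^sup>2) + - (l - d / s\<^sup>2)\<^sup>2 * s\<^sup>2 / 2"
  proof -
    have "d\<^sup>2 / (2 * s\<^sup>2) + - (l - d / s\<^sup>2)\<^sup>2 * s\<^sup>2 / 2 = - l\<^sup>2 * s\<^sup>2 / 2 + l * d"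
      using s by (simp add: field_simps power2_eq_square)
    thus ?thesis
      by (simp add: field_simps)
  qed
  have "normal_density 0 (1/y) l * exp (l * d - l\<^sup>2 * (s\<^sup>2 - y\<^sup>2) / 2)
      = y / sqrt (2*pi) * exp (- l\<^sup>2 * y\<^sup>2 / 2 + (l * d - l\<^sup>2 * (s\<^sup>2 - y\<^sup>2) / 2))"
    unfolding n_y exp_add by (simp add: mult.assoc)
  also have "\<dots> = y / sqrt (2*pi) * exp (d\<^sup>2 / (2 * s\<^sup>2)) * exp (- (l - d / s\<^sup>2)\<^sup>2 * s\<^sup>2 / 2)"
    unfolding square exp_add by (simp add: mult.assoc)
  also have "\<dots> = y / s * exp (d\<^sup>2 / (2 * s\<^sup>2)) * normal_density (d / s\<^sup>2) (1/s) l"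
    unfolding n_s using s by (simp add: field_simps)
  finally show ?thesis .
qed

lemma nn_integral_normal_density_mult_exp:
  fixes y v d :: real
  assumes y: "0 < y" and v: "0 \<le> v"
  shows "(\<integral>\<^sup>+ l. ennreal (normal_density 0 (1/y) l) * ennreal (exp (l * d - l\<^sup>2 * v / 2)) \<partial>lborel)
       = ennreal (y / sqrt (y\<^sup>2 + v) * exp (d\<^sup>2 / (2 * (y\<^sup>2 + v))))"
proof -
  define s where "s = sqrt (y\<^sup>2 + v)"
  have s: "0 < s" "s\<^sup>2 = y\<^sup>2 + v"
    using y v by (auto simp: s_def add_pos_nonneg)
  define C where "C = y / s * exp (d\<^sup>2 / (2 * s\<^sup>2))"
  have "(\<integral>\<^sup>+ l. ennreal (normal_density 0 (1/y) l) * ennreal (exp (l * d - l\<^sup>2 * v / 2)) \<partial>lborel)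
      = (\<integral>\<^sup>+ l. ennreal C * ennreal (normal_density (d / s\<^sup>2) (1/s) l) \<partial>lborel)"
    using normal_density_mult_exp[OF y s(1), of l d for l] y s
    by (intro nn_integral_cong) (simp add: C_def ennreal_mult[symmetric])
  also have "\<dots> = ennreal C"
    using s by (simp add: nn_integral_cmult nn_integral_normal_density)
  finally show ?thesis
    unfolding C_def s(2) s_def[symmetric] .
qed

text \<open>With \<open>z = max 0 a\<close> and \<open>u = exp (z/4)\<close>: \<open>x * sqrt z \<le> x\<^sup>2 + z/4\<close>, and
  \<open>2 * u \<le> w * u\<^sup>2 + 1/w\<close> by AM-GM.\<close>
lemma exp_mult_sqrt_max_le:
  fixes x a w :: real
  assumes w: "0 < w" "w \<le> 1"
  shows "exp (x * sqrt (max 0 a)) \<le> exp (x\<^sup>2) * ((1 + w * exp (a / 2) + 1 / w) / 2)"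
proof -
  define z where "z = max 0 a"
  define u where "u = exp (z / 4)"
  have "x * sqrt z \<le> x\<^sup>2 + z / 4"
    using sum_power2_ge_zero[of "x - sqrt z / 2" 0] by (simp add: z_def power2_eq_square algebra_simps)
  hence "exp (x * sqrt z) \<le> exp (x\<^sup>2) * u"
    by (simp add: u_def exp_add[symmetric])
  also have "\<dots> \<le> exp (x\<^sup>2) * ((1 + w * exp (a / 2) + 1 / w) / 2)"
  proof (rule mult_left_mono)
    have "2 * u * w \<le> u\<^sup>2 * w * w + 1"
      using sum_power2_ge_zero[of "u * w - 1" 0] by (simp add: power2_eq_square algebra_simps)
    hence "2 * u \<le> u\<^sup>2 * w + 1 / w"
      using w by (simp add: field_simps power2_eq_square)
    moreover have "u\<^sup>2 \<le> 1 + exp (a / 2)"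
      by (cases "a \<le> 0") (auto simp: u_def z_def max_def power2_eq_square exp_add[symmetric])
    hence "u\<^sup>2 * w \<le> (1 + exp (a / 2)) * w"
      using w by (intro mult_right_mono) auto
    moreover have "(1 + exp (a / 2)) * w \<le> 1 + w * exp (a / 2)"
      using w by (simp add: algebra_simps)
    ultimately have "2 * u \<le> 1 + w * exp (a / 2) + 1 / w"
      by linarith
    thus "u \<le> (1 + w * exp (a / 2) + 1 / w) / 2"
      by simp
  qed simp
  finally show ?thesis
    unfolding z_def .
qed

lemma exp_mult_sqrt_max_le_weighted:
  fixes x a s r :: real
  assumes s: "0 < s" and r: "0 \<le> r"
  shows "exp (x * sqrt (max 0 a))
       \<le> exp (x\<^sup>2) / 2 * (2 + sqrt s / sqrt (s + r) * exp (a / 2) + r / (2 * s))"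
proof -
  define w where "w = sqrt s / sqrt (s + r)"
  have w: "0 < w" "w \<le> 1"
    using s r by (auto simp: w_def)
  have "1 / w = sqrt ((s + r) / s)"
    by (simp add: w_def real_sqrt_divide)
  also have "\<dots> = sqrt (1 + r / s)"
    using s by (simp add: field_simps)
  also have "\<dots> \<le> sqrt ((1 + r / (2 * s))\<^sup>2)"
    using s r by (intro real_sqrt_le_mono) (simp add: power2_eq_square field_simps)
  also have "\<dots> = 1 + r / (2 * s)"
    using s r by simp
  finally have "1 / w \<le> 1 + r / (2 * s)" .
  hence "exp (x\<^sup>2) * ((1 + w * exp (a / 2) + 1 / w) / 2)
      \<le> exp (x\<^sup>2) * ((1 + w * exp (a / 2) + (1 + r / (2 * s))) / 2)"
    by (intro mult_left_mono) auto
  also have "\<dots> = exp (x\<^sup>2) / 2 * (2 + w * exp (a / 2) + r / (2 * s))"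
    by (simp add: field_simps)
  finally show ?thesis
    using exp_mult_sqrt_max_le[OF w, of x a] unfolding w_def by linarith
qed

lemma normal_mixture_change_of_measure:
  fixes D W :: "'a \<Rightarrow> real"
  assumes p: "prob_space p" and q: "prob_space q" and sets: "sets p = sets q"
    and KL: "KL p q = ereal k"
    and D: "integrable p D" "D \<in> borel_measurable q"
    and W: "integrable p W" "W \<in> borel_measurable q" "\<And>t. t \<in> space p \<Longrightarrow> 0 \<le> W t"
    and y: "0 < y"
  shows "ennreal (y / sqrt (y\<^sup>2 + (\<integral>t. W t \<partial>p))
            * exp ((\<integral>t. D t \<partial>p)\<^sup>2 / (2 * (y\<^sup>2 + (\<integral>t. W t \<partial>p))) - k))
    \<le> (\<integral>\<^sup>+ l. ennreal (normal_density 0 (1/y) l)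
            * (\<integral>\<^sup>+ t. ennreal (exp (l * D t - l\<^sup>2 * W t / 2)) \<partial>q) \<partial>lborel)"
proof -
  define d where "d = (\<integral>t. D t \<partial>p)"
  define v where "v = (\<integral>t. W t \<partial>p)"
  have v: "0 \<le> v"
    unfolding v_def using W(3) by (simp add: integral_nonneg)
  have "ennreal (y / sqrt (y\<^sup>2 + v) * exp (d\<^sup>2 / (2 * (y\<^sup>2 + v)) - k))
      = ennreal (y / sqrt (y\<^sup>2 + v) * exp (d\<^sup>2 / (2 * (y\<^sup>2 + v)))) * ennreal (exp (- k))"
    using y v by (simp add: exp_diff exp_minus field_simps ennreal_mult[symmetric])
  also have "\<dots> = (\<integral>\<^sup>+ l. ennreal (normal_density 0 (1/y) l)
      * ennreal (exp (l * d - l\<^sup>2 * v / 2)) * ennreal (exp (- k)) \<partial>lborel)"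
    by (simp add: nn_integral_normal_density_mult_exp[OF y v] nn_integral_multc)
  also have "\<dots> \<le> (\<integral>\<^sup>+ l. ennreal (normal_density 0 (1/y) l)
      * (\<integral>\<^sup>+ t. ennreal (exp (l * D t - l\<^sup>2 * W t / 2)) \<partial>q) \<partial>lborel)"
  proof (intro nn_integral_mono)
    fix l
    have "(\<integral>t. l * D t - l\<^sup>2 * W t / 2 \<partial>p) = l * d - l\<^sup>2 * v / 2"
      using D W by (simp add: d_def v_def)
    hence DV: "ennreal (exp (l * d - l\<^sup>2 * v / 2 - k))
        \<le> (\<integral>\<^sup>+ t. ennreal (exp (l * D t - l\<^sup>2 * W t / 2)) \<partial>q)"
      using donsker_varadhan[OF p q sets KL, of "\<lambda>t. l * D t - l\<^sup>2 * W t / 2"] D W by simp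
    have "ennreal (exp (l * d - l\<^sup>2 * v / 2)) * ennreal (exp (- k))
        = ennreal (exp (l * d - l\<^sup>2 * v / 2 - k))"
      using ennreal_mult[OF exp_ge_zero exp_ge_zero, of "l * d - l\<^sup>2 * v / 2" "- k"]
      by (simp add: exp_add[symmetric])
    hence "ennreal (normal_density 0 (1/y) l) * ennreal (exp (l * d - l\<^sup>2 * v / 2))
          * ennreal (exp (- k))
        = ennreal (normal_density 0 (1/y) l) * ennreal (exp (l * d - l\<^sup>2 * v / 2 - k))"
      by (simp only: mult.assoc)
    also have "\<dots> \<le> ennreal (normal_density 0 (1/y) l)
          * (\<integral>\<^sup>+ t. ennreal (exp (l * D t - l\<^sup>2 * W t / 2)) \<partial>q)"
      by (rule mult_left_mono[OF DV]) simp
    finally show "ennreal (normal_density 0 (1/y) l) * ennreal (exp (l * d - l\<^sup>2 * v / 2))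
          * ennreal (exp (- k))
        \<le> ennreal (normal_density 0 (1/y) l)
          * (\<integral>\<^sup>+ t. ennreal (exp (l * D t - l\<^sup>2 * W t / 2)) \<partial>q)" .
  qed
  finally show ?thesis
    unfolding d_def v_def .
qed

lemma eexp_ereal [simp]: "eexp (ereal a) = ennreal (exp a)"
  by (simp add: eexp_def)

locale pac_bayes = M: prob_space M + p0: prob_space p0
  for M :: "'w measure" and T :: "'t measure" and Zs :: "'z measure" and S :: "'w \<Rightarrow> 'z"
    and \<Delta> V :: "'t \<Rightarrow> 'z \<Rightarrow> real" and phat :: "'z \<Rightarrow> 't measure" and p0 :: "'t measure" +
  assumes S_measurable[measurable]: "S \<in> M \<rightarrow>\<^sub>M Zs"
    and \<Delta>_measurable[measurable]: "(\<lambda>(t, z). \<Delta> t z) \<in> borel_measurable (T \<Otimes>\<^sub>M Zs)"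
    and V_measurable[measurable]: "(\<lambda>(t, z). V t z) \<in> borel_measurable (T \<Otimes>\<^sub>M Zs)"
    and V_nonneg: "\<And>t z. t \<in> space T \<Longrightarrow> z \<in> space Zs \<Longrightarrow> 0 \<le> V t z"
    and canonical: "\<And>t l. t \<in> space T \<Longrightarrow>
       (\<integral>\<^sup>+ \<omega>. ennreal (exp (l * \<Delta> t (S \<omega>) - l\<^sup>2 * (sqrt (V t (S \<omega>)))\<^sup>2 / 2)) \<partial>M) \<le> 1"
    and phat_measurable: "phat \<in> Zs \<rightarrow>\<^sub>M prob_algebra T"
    and sets_p0[measurable_cong]: "sets p0 = sets T"
    and \<Delta>_integrable: "AE \<omega> in M. integrable (phat (S \<omega>)) (\<lambda>t. \<Delta> t (S \<omega>))"
begin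

definition post_Delta :: "'z \<Rightarrow> real" where
  "post_Delta z = (\<integral>t. \<Delta> t z \<partial>phat z)"

definition post_V :: "'z \<Rightarrow> ennreal" where
  "post_V z = (\<integral>\<^sup>+ t. ennreal (V t z) \<partial>phat z)"

definition prior_mixture :: "real \<Rightarrow> 'z \<Rightarrow> ennreal" where
  "prior_mixture y z = (\<integral>\<^sup>+ l. ennreal (normal_density 0 (1/y) l)
     * (\<integral>\<^sup>+ t. ennreal (exp (l * \<Delta> t z - l\<^sup>2 * V t z / 2)) \<partial>p0) \<partial>lborel)"

lemma prob_space_phat: "z \<in> space Zs \<Longrightarrow> prob_space (phat z)"
  and sets_phat: "z \<in> space Zs \<Longrightarrow> sets (phat z) = sets T"
  using measurable_space[OF phat_measurable] by (auto simp: space_prob_algebra)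

lemma measurable_post_V[measurable]: "post_V \<in> borel_measurable Zs"
proof -
  have "phat \<in> Zs \<rightarrow>\<^sub>M subprob_algebra T"
    by (rule measurable_prob_algebraD[OF phat_measurable])
  thus ?thesis
    unfolding post_V_def by (rule nn_integral_measurable_subprob_algebra2[rotated]) measurable
qed

lemma measurable_prior_mixture[measurable]: "prior_mixture y \<in> borel_measurable Zs"
  unfolding prior_mixture_def by measurable

lemma nn_integral_prior_mixture_le_one:
  assumes y: "0 < y"
  shows "(\<integral>\<^sup>+ \<omega>. prior_mixture y (S \<omega>) \<partial>M) \<le> 1"
proof -
  interpret p0M: pair_sigma_finite p0 M ..
  interpret lM: pair_sigma_finite lborel M ..
  define E where "E l \<omega> = (\<integral>\<^sup>+ t. ennreal (exp (l * \<Delta> t (S \<omega>) - l\<^sup>2 * V t (S \<omega>) / 2)) \<partial>p0)"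
    for l \<omega>
  have [measurable]: "(\<lambda>(l, \<omega>). E l \<omega>) \<in> borel_measurable (lborel \<Otimes>\<^sub>M M)"
    unfolding E_def by measurable
  have E_mean: "(\<integral>\<^sup>+ \<omega>. E l \<omega> \<partial>M) \<le> 1" for l
  proof -
    have "(\<integral>\<^sup>+ \<omega>. E l \<omega> \<partial>M)
        = (\<integral>\<^sup>+ t. \<integral>\<^sup>+ \<omega>. ennreal (exp (l * \<Delta> t (S \<omega>) - l\<^sup>2 * V t (S \<omega>) / 2)) \<partial>M \<partial>p0)"
      unfolding E_def by (rule p0M.Fubini') measurable
    also have "\<dots> \<le> (\<integral>\<^sup>+ t. 1 \<partial>p0)"
    proof (intro nn_integral_mono)
      fix t assume "t \<in> space p0"
      hence t: "t \<in> space T"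
        by (simp add: sets_eq_imp_space_eq[OF sets_p0])
      have "V t (S \<omega>) = (sqrt (V t (S \<omega>)))\<^sup>2" if "\<omega> \<in> space M" for \<omega>
        using V_nonneg[OF t measurable_space[OF S_measurable that]] by simp
      thus "(\<integral>\<^sup>+ \<omega>. ennreal (exp (l * \<Delta> t (S \<omega>) - l\<^sup>2 * V t (S \<omega>) / 2)) \<partial>M) \<le> 1"
        using canonical[OF t, of l] by (subst nn_integral_cong) auto
    qed
    finally show ?thesis
      by (simp add: p0.emeasure_space_1)
  qed
  have "(\<integral>\<^sup>+ \<omega>. prior_mixture y (S \<omega>) \<partial>M)
      = (\<integral>\<^sup>+ l. \<integral>\<^sup>+ \<omega>. ennreal (normal_density 0 (1/y) l) * E l \<omega> \<partial>M \<partial>lborel)"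
    unfolding prior_mixture_def E_def[symmetric] by (rule lM.Fubini') measurable
  also have "\<dots> = (\<integral>\<^sup>+ l. ennreal (normal_density 0 (1/y) l) * (\<integral>\<^sup>+ \<omega>. E l \<omega> \<partial>M) \<partial>lborel)"
    by (intro nn_integral_cong nn_integral_cmult) measurable
  also have "\<dots> \<le> (\<integral>\<^sup>+ l. ennreal (normal_density 0 (1/y) l) \<partial>lborel)"
    using E_mean by (intro nn_integral_mono) (simp add: mult_left_le)
  also have "\<dots> = 1"
    using y by (simp add: nn_integral_normal_density)
  finally show ?thesis .
qed

lemma prior_mixture_lower_bound:
  assumes z: "z \<in> space Zs" and y: "0 < y" and int: "integrable (phat z) (\<lambda>t. \<Delta> t z)"
    and KL: "KL (phat z) p0 = ereal k" and fin: "post_V z \<noteq> \<infinity>"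
  shows "ennreal (y / sqrt (y\<^sup>2 + enn2real (post_V z))
           * exp ((post_Delta z)\<^sup>2 / (2 * (y\<^sup>2 + enn2real (post_V z))) - k))
    \<le> prior_mixture y z"
proof -
  have sets: "sets (phat z) = sets p0"
    using sets_phat[OF z] sets_p0 by simp
  have D_meas: "(\<lambda>t. \<Delta> t z) \<in> borel_measurable p0"
    using measurable_compose[OF measurable_Pair2'[OF z] \<Delta>_measurable]
    by (simp add: measurable_cong_sets[OF sets_p0 refl])
  have W_meas: "(\<lambda>t. V t z) \<in> borel_measurable p0"
    using measurable_compose[OF measurable_Pair2'[OF z] V_measurable]
    by (simp add: measurable_cong_sets[OF sets_p0 refl])
  hence W_meas': "(\<lambda>t. V t z) \<in> borel_measurable (phat z)"
    by (simp add: measurable_cong_sets[OF sets refl])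
  have W_nonneg: "\<And>t. t \<in> space (phat z) \<Longrightarrow> 0 \<le> V t z"
    using V_nonneg[OF _ z] sets_eq_imp_space_eq[OF sets_phat[OF z]] by simp
  have W_int: "integrable (phat z) (\<lambda>t. V t z)"
    using W_meas' W_nonneg fin by (intro integrableI_nonneg) (auto simp: post_V_def less_top)
  have "(\<integral>t. V t z \<partial>phat z) = enn2real (post_V z)"
    unfolding post_V_def using W_meas' W_nonneg by (intro integral_eq_nn_integral) auto
  thus ?thesis
    using normal_mixture_change_of_measure[OF prob_space_phat[OF z] p0.prob_space_axioms sets KL
        int D_meas W_int W_meas W_nonneg y]
    by (simp only: prior_mixture_def post_Delta_def)
qed

lemma mixture_bound_le_prior_mixture:
  assumes z: "z \<in> space Zs" and y: "0 < y" and int: "integrable (phat z) (\<lambda>t. \<Delta> t z)"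
  shows "(if post_V z = \<infinity> then 0
          else ennreal (y / sqrt (y\<^sup>2 + enn2real (post_V z)))
            * eexp (ereal ((post_Delta z)\<^sup>2 / (2 * (y\<^sup>2 + enn2real (post_V z)))) - KL (phat z) p0))
    \<le> prior_mixture y z"
proof (cases "post_V z = \<infinity> \<or> KL (phat z) p0 = \<infinity>")
  case True
  thus ?thesis
    by (auto simp: eexp_def)
next
  case False
  have "sets (phat z) = sets p0"
    using sets_phat[OF z] sets_p0 by simp
  hence "KL (phat z) p0 = ereal (\<integral>x. ln (enn2real (RN_deriv p0 (phat z) x)) \<partial>phat z)"
    using KL_finite_eq[OF p0.prob_space_axioms] False by simp
  then obtain k where k: "KL (phat z) p0 = ereal k" ..
  show ?thesis
    using prior_mixture_lower_bound[OF z y int k] False y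
    by (simp add: k ennreal_mult[symmetric])
qed

theorem nn_integral_mixture_bound_le_one:
  assumes y: "0 < y"
  shows "(\<integral>\<^sup>+ \<omega>. (if post_V (S \<omega>) = \<infinity> then 0
          else ennreal (y / sqrt (y\<^sup>2 + enn2real (post_V (S \<omega>))))
            * eexp (ereal ((post_Delta (S \<omega>))\<^sup>2 / (2 * (y\<^sup>2 + enn2real (post_V (S \<omega>)))))
                - KL (phat (S \<omega>)) p0)) \<partial>M)
    \<le> 1"
proof -
  have "AE \<omega> in M. (if post_V (S \<omega>) = \<infinity> then 0
          else ennreal (y / sqrt (y\<^sup>2 + enn2real (post_V (S \<omega>))))
            * eexp (ereal ((post_Delta (S \<omega>))\<^sup>2 / (2 * (y\<^sup>2 + enn2real (post_V (S \<omega>)))))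
                - KL (phat (S \<omega>)) p0))
      \<le> prior_mixture y (S \<omega>)"
    using \<Delta>_integrable AE_space
  proof eventually_elim
    case (elim \<omega>)
    show ?case
      by (rule mixture_bound_le_prior_mixture[OF measurable_space[OF S_measurable elim(2)] y elim(1)])
  qed
  hence "(\<integral>\<^sup>+ \<omega>. (if post_V (S \<omega>) = \<infinity> then 0
          else ennreal (y / sqrt (y\<^sup>2 + enn2real (post_V (S \<omega>))))
            * eexp (ereal ((post_Delta (S \<omega>))\<^sup>2 / (2 * (y\<^sup>2 + enn2real (post_V (S \<omega>)))))
                - KL (phat (S \<omega>)) p0)) \<partial>M)
      \<le> (\<integral>\<^sup>+ \<omega>. prior_mixture y (S \<omega>) \<partial>M)"
    by (rule nn_integral_mono_AE)
  also have "\<dots> \<le> 1"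
    by (rule nn_integral_prior_mixture_le_one[OF y])
  finally show ?thesis .
qed

lemma exp_sqrt_bound_le_prior_mixture:
  assumes z: "z \<in> space Zs" and int: "integrable (phat z) (\<lambda>t. \<Delta> t z)"
    and fin: "post_V z \<noteq> \<infinity>" and s: "0 < s"
  shows "ennreal (exp (x * sqrt (real_of_ereal (max 0
            (ereal ((post_Delta z)\<^sup>2) / enn2ereal (ennreal s + post_V z) - 2 * KL (phat z) p0)))))
    \<le> ennreal (exp (x\<^sup>2) / 2) * (2 + prior_mixture (sqrt s) z + ennreal (1 / (2 * s)) * post_V z)"
proof -
  define r where "r = enn2real (post_V z)"
  have r: "post_V z = ennreal r" "0 \<le> r"
    using fin by (auto simp: r_def less_top)
  have sum: "enn2ereal (ennreal s + post_V z) = ereal (s + r)"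
    using s r by (simp add: r(1) ennreal_plus[symmetric] del: ennreal_plus)
  have "ennreal (exp (x\<^sup>2) / 2) * 2 = ennreal (exp (x\<^sup>2))"
    using ennreal_mult[of "exp (x\<^sup>2) / 2" 2] by simp
  hence lower: "ennreal (exp (x\<^sup>2)) \<le> ennreal (exp (x\<^sup>2) / 2)
      * (2 + prior_mixture (sqrt s) z + ennreal (1 / (2 * s)) * post_V z)"
    by (metis add.assoc add_increasing2 mult_left_mono order_refl zero_le)
  show ?thesis
  proof (cases "KL (phat z) p0 = \<infinity>")
    case True
    have "ennreal 1 \<le> ennreal (exp (x\<^sup>2))"
      by (intro ennreal_leI) simp
    with lower have "1 \<le> ennreal (exp (x\<^sup>2) / 2)
        * (2 + prior_mixture (sqrt s) z + ennreal (1 / (2 * s)) * post_V z)"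
      by (metis ennreal_1 order_trans)
    thus ?thesis
      using True by (simp add: sum)
  next
    case False
    have "sets (phat z) = sets p0"
      using sets_phat[OF z] sets_p0 by simp
    hence "KL (phat z) p0 = ereal (\<integral>x. ln (enn2real (RN_deriv p0 (phat z) x)) \<partial>phat z)"
      using KL_finite_eq[OF p0.prob_space_axioms] False by simp
    then obtain k where k: "KL (phat z) p0 = ereal k" ..
    define a where "a = (post_Delta z)\<^sup>2 / (s + r) - 2 * k"
    define w where "w = sqrt s / sqrt (s + r) * exp (a / 2)"
    have w: "0 \<le> w"
      using s r by (simp add: w_def)
    have "ennreal (exp (x * sqrt (max 0 a)))
        \<le> ennreal (exp (x\<^sup>2) / 2 * (2 + w + 1 / (2 * s) * r))"
      using exp_mult_sqrt_max_le_weighted[OF s r(2), of x a] by (intro ennreal_leI) (simp add: w_def)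
    also have "\<dots> = ennreal (exp (x\<^sup>2) / 2) * (2 + ennreal w + ennreal (1 / (2 * s)) * ennreal r)"
    proof -
      have "ennreal (2 + w + 1 / (2 * s) * r) = 2 + ennreal w + ennreal (1 / (2 * s)) * ennreal r"
        using s r w ennreal_mult[of "1 / (2 * s)" r] by simp
      moreover have "ennreal (exp (x\<^sup>2) / 2 * (2 + w + 1 / (2 * s) * r))
          = ennreal (exp (x\<^sup>2) / 2) * ennreal (2 + w + 1 / (2 * s) * r)"
        using s r w by (intro ennreal_mult) auto
      ultimately show ?thesis
        by simp
    qed
    also have "\<dots> \<le> ennreal (exp (x\<^sup>2) / 2)
        * (2 + prior_mixture (sqrt s) z + ennreal (1 / (2 * s)) * post_V z)"
    proof -
      have "w = sqrt s / sqrt ((sqrt s)\<^sup>2 + r) * exp ((post_Delta z)\<^sup>2 / (2 * ((sqrt s)\<^sup>2 + r)) - k)"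
        using s by (simp add: w_def a_def field_simps)
      thus ?thesis
        using prior_mixture_lower_bound[OF z real_sqrt_gt_zero[OF s] int k fin, folded r_def] r
        by (intro mult_left_mono add_mono) auto
    qed
    moreover have "ereal ((post_Delta z)\<^sup>2) / enn2ereal (ennreal s + post_V z) - 2 * KL (phat z) p0
        = ereal a"
      using s r(2) by (simp add: sum k a_def)
    moreover have "real_of_ereal (max 0 (ereal a)) = max 0 a"
      by (simp add: max_def)
    ultimately show ?thesis
      by simp
  qed
qed

theorem nn_integral_exp_sqrt_bound_le:
  defines "vt \<equiv> \<integral>\<^sup>+ \<omega>. post_V (S \<omega>) \<partial>M"
  assumes vt: "0 < vt" "vt < \<infinity>"
  shows "(\<integral>\<^sup>+ \<omega>. ennreal (exp (x * sqrt (real_of_ereal (max 0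
            (ereal ((post_Delta (S \<omega>))\<^sup>2) / enn2ereal (vt + post_V (S \<omega>))
              - 2 * KL (phat (S \<omega>)) p0))))) \<partial>M)
    \<le> ennreal (2 * exp (x\<^sup>2))"
proof -
  define s where "s = enn2real vt"
  have s: "vt = ennreal s" "0 < s"
    using vt by (auto simp: s_def less_top enn2real_positive_iff)
  define R where "R \<omega> = ennreal (exp (x\<^sup>2) / 2)
      * (2 + prior_mixture (sqrt s) (S \<omega>) + ennreal (1 / (2 * s)) * post_V (S \<omega>))" for \<omega>
  have "AE \<omega> in M. post_V (S \<omega>) \<noteq> \<infinity>"
    using vt(2) unfolding vt_def by (intro nn_integral_PInf_AE) auto
  with \<Delta>_integrable AE_space
  have "AE \<omega> in M. ennreal (exp (x * sqrt (real_of_ereal (max 0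
            (ereal ((post_Delta (S \<omega>))\<^sup>2) / enn2ereal (vt + post_V (S \<omega>))
              - 2 * KL (phat (S \<omega>)) p0))))) \<le> R \<omega>"
  proof eventually_elim
    case (elim \<omega>)
    show ?case
      unfolding R_def s(1)
      by (rule exp_sqrt_bound_le_prior_mixture[OF measurable_space[OF S_measurable elim(2)] elim(1,3) s(2)])
  qed
  hence "(\<integral>\<^sup>+ \<omega>. ennreal (exp (x * sqrt (real_of_ereal (max 0
            (ereal ((post_Delta (S \<omega>))\<^sup>2) / enn2ereal (vt + post_V (S \<omega>))
              - 2 * KL (phat (S \<omega>)) p0))))) \<partial>M)
      \<le> (\<integral>\<^sup>+ \<omega>. R \<omega> \<partial>M)"
    by (rule nn_integral_mono_AE)
  also have "\<dots> = ennreal (exp (x\<^sup>2) / 2)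
      * (2 + (\<integral>\<^sup>+ \<omega>. prior_mixture (sqrt s) (S \<omega>) \<partial>M) + ennreal (1 / (2 * s)) * vt)"
    unfolding R_def vt_def by (simp add: nn_integral_cmult nn_integral_add M.emeasure_space_1)
  also have "\<dots> \<le> ennreal (exp (x\<^sup>2) / 2) * (2 + 1 + 1)"
  proof -
    have "ennreal (1 / (2 * s)) * vt = ennreal (1 / 2)"
      using s by (simp add: ennreal_mult[symmetric])
    also have "\<dots> \<le> 1"
      using ennreal_leI[of "1 / 2" 1] by simp
    finally have "ennreal (1 / (2 * s)) * vt \<le> 1" .
    thus ?thesis
      using nn_integral_prior_mixture_le_one[OF real_sqrt_gt_zero[OF s(2)]]
      by (intro mult_left_mono add_mono) auto
  qed
  also have "\<dots> = ennreal (2 * exp (x\<^sup>2))"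
    using ennreal_mult[of "exp (x\<^sup>2) / 2" 4] by simp
  finally show ?thesis .
qed

end

text \<open>The random element \<open>\<theta>\<close> enters only through its conditional law \<open>phat (S \<omega>)\<close>.\<close>
theorem theorem4:
  fixes M :: "'w measure" and T :: "'t measure" and Zs :: "'z measure"
    and S :: "'w \<Rightarrow> 'z" and \<theta> :: "'w \<Rightarrow> 't"
    and \<Delta> V :: "'t \<Rightarrow> 'z \<Rightarrow> real"
    and phat :: "'z \<Rightarrow> 't measure" and p0 :: "'t measure"
  assumes M: "prob_space M"
    and S_meas: "S \<in> M \<rightarrow>\<^sub>M Zs"
    and \<Delta>_meas: "(\<lambda>(t, z). \<Delta> t z) \<in> borel_measurable (T \<Otimes>\<^sub>M Zs)"
    and V_meas: "(\<lambda>(t, z). V t z) \<in> borel_measurable (T \<Otimes>\<^sub>M Zs)"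
    and V_nonneg: "\<And>t z. t \<in> space T \<Longrightarrow> z \<in> space Zs \<Longrightarrow> V t z \<ge> 0"
    and canonical: "\<And>t l. t \<in> space T \<Longrightarrow>
       (\<integral>\<^sup>+ \<omega>. ennreal (exp (l * \<Delta> t (S \<omega>) - l\<^sup>2 * (sqrt (V t (S \<omega>)))\<^sup>2 / 2)) \<partial>M) \<le> 1"
    and phat_kernel: "phat \<in> Zs \<rightarrow>\<^sub>M prob_algebra T"
    and p0: "prob_space p0" "sets p0 = sets T"
    and \<theta>_meas: "\<theta> \<in> M \<rightarrow>\<^sub>M T"
    and \<theta>_cond: "\<And>A B. A \<in> sets Zs \<Longrightarrow> B \<in> sets T \<Longrightarrow>
       measure M {\<omega> \<in> space M. S \<omega> \<in> A \<and> \<theta> \<omega> \<in> B}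
         = (\<integral>\<omega>. indicator A (S \<omega>) * measure (phat (S \<omega>)) B \<partial>M)"
    and \<Delta>_int: "AE \<omega> in M. integrable (phat (S \<omega>)) (\<lambda>t. \<Delta> t (S \<omega>))"
  shows
    "(\<forall>y>0. (\<integral>\<^sup>+ \<omega>.
        (let d = (\<integral>t. \<Delta> t (S \<omega>) \<partial>phat (S \<omega>));
             v = (\<integral>\<^sup>+ t. ennreal (V t (S \<omega>)) \<partial>phat (S \<omega>))
         in if v = \<infinity> then 0
            else ennreal (y / sqrt (y\<^sup>2 + enn2real v))
               * eexp (ereal (d\<^sup>2 / (2 * (y\<^sup>2 + enn2real v))) - KL (phat (S \<omega>)) p0)) \<partial>M) \<le> 1)
   \<and> (let vt = (\<integral>\<^sup>+ \<omega>. (\<integral>\<^sup>+ t. ennreal (V t (S \<omega>)) \<partial>phat (S \<omega>)) \<partial>M)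
      in 0 < vt \<and> vt < \<infinity> \<longrightarrow>
        (\<forall>x\<ge>0. (\<integral>\<^sup>+ \<omega>.
          (let d = (\<integral>t. \<Delta> t (S \<omega>) \<partial>phat (S \<omega>));
               v = (\<integral>\<^sup>+ t. ennreal (V t (S \<omega>)) \<partial>phat (S \<omega>))
           in ennreal (exp (x * sqrt (real_of_ereal
                (max 0 (ereal (d\<^sup>2) / enn2ereal (vt + v) - 2 * KL (phat (S \<omega>)) p0)))))) \<partial>M)
          \<le> ennreal (2 * exp (x\<^sup>2))))"
proof -
  have "pac_bayes M T Zs S \<Delta> V phat p0"
    unfolding pac_bayes_def pac_bayes_axioms_def using assms by auto
  then interpret pac_bayes M T Zs S \<Delta> V phat p0 .
  show ?thesis
    unfolding Let_def post_Delta_def[symmetric] post_V_def[symmetric]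
    using nn_integral_mixture_bound_le_one nn_integral_exp_sqrt_bound_le by auto
qed

end
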